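(* Let $f\in\mathbb C[U_1,\ldots,U_n]$ have nonzero constant term. Then there exists $m\ge1$ with $\mathcal L(f^m)\ne0$.
   Context: $\mathcal L:\mathbb C[U_1,\ldots,U_n]\to\mathbb C$ is the $\mathbb C$-linear map defined on monomials by $\mathcal L(U_1^{\ell_1}\cdots U_n^{\ell_n})=\ell_1!\cdots\ell_n!$. *)

theory Defs
  imports Complex_Main "HOL-Library.Poly_Mapping"
begin

text \<open>The variable U_(i+1) corresponds to index i.\<close>

type_synonym cpoly = "(nat \<Rightarrow>\<^sub>0 nat) \<Rightarrow>\<^sub>0 complex"

definition in_vars :: "nat \<Rightarrow> cpoly \<Rightarrow> bool" where
  "in_vars n p \<longleftrightarrow> (\<forall>m \<in> Poly_Mapping.keys p. Poly_Mapping.keys m \<subseteq> {..<n})"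

definition Lfun :: "cpoly \<Rightarrow> complex" where
  "Lfun p = (\<Sum>(m::nat \<Rightarrow>\<^sub>0 nat) \<in> Poly_Mapping.keys p. Poly_Mapping.lookup p m * (\<Prod>(i::nat) \<in> Poly_Mapping.keys m. fact (Poly_Mapping.lookup m i) :: complex))"

definition const_term :: "cpoly \<Rightarrow> complex" where
  "const_term p = Poly_Mapping.lookup p 0"

end

theory Submission
  imports Defs "HOL-Computational_Algebra.Polynomial" "HOL-Computational_Algebra.Primes"
begin

text \<open>
  Let f have nonzero constant term c. We show that L(f^p) is nonzero for a suitable prime p.

  Let S be the subring of the complex numbers generated by the coefficients of f. Two facts
  combine to the theorem:

  (1) Frobenius congruence: for every prime p, L(f^p) = c^p modulo pS. Indeed L is additive,
      the mixed terms of the binomial expansion of a p-th power are multiples of p, and L of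
      the p-th power of a nonconstant term a U^alpha contains a factorial (p l)! with l > 0.

  (2) Every nonzero element d of a finitely generated subring S of the complex numbers is
      non-nilpotent modulo pS for some prime p. This is proved by induction on the number of
      generators, starting from the integers. Adjoining a transcendental element is handled via
      leading coefficients; adjoining an algebraic element b uses a minimal polynomial relation
      of b over S and pseudo-division to move divisibility from S[b] back to S.

  Choosing p by (2) for d = c, the congruence (1) shows that L(f^p) = 0 would put c^p into pS.
\<close>

locale csubring =
  fixes S :: "complex set"
  assumes one_closed: "1 \<in> S"
    and uminus_closed: "x \<in> S \<Longrightarrow> - x \<in> S"
    and add_closed: "x \<in> S \<Longrightarrow> y \<in> S \<Longrightarrow> x + y \<in> S"
    and mult_closed: "x \<in> S \<Longrightarrow> y \<in> S \<Longrightarrow> x * y \<in> S"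
begin

lemma zero_closed: "0 \<in> S"
  using add_closed[OF one_closed uminus_closed[OF one_closed]] by simp

lemma diff_closed: "x \<in> S \<Longrightarrow> y \<in> S \<Longrightarrow> x - y \<in> S"
  using add_closed[of x "- y"] uminus_closed[of y] by simp

lemma of_nat_closed: "of_nat n \<in> S"
  by (induction n) (auto simp: zero_closed one_closed add_closed)

lemma power_closed: "x \<in> S \<Longrightarrow> x ^ n \<in> S"
  by (induction n) (auto simp: one_closed mult_closed)

lemma sum_closed: "(\<And>i. i \<in> A \<Longrightarrow> f i \<in> S) \<Longrightarrow> sum f A \<in> S"
  by (induction A rule: infinite_finite_induct) (auto simp: zero_closed add_closed)

lemma prod_closed: "(\<And>i. i \<in> A \<Longrightarrow> f i \<in> S) \<Longrightarrow> prod f A \<in> S"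
  by (induction A rule: infinite_finite_induct) (auto simp: one_closed mult_closed)

lemma fact_closed: "(fact n :: complex) \<in> S"
  using of_nat_closed[of "fact n"] by simp

end

lemma csubring_Ints: "csubring (range of_int)"
proof
  show "1 \<in> range (of_int :: int \<Rightarrow> complex)"
    by (intro range_eqI[of _ _ 1]) simp
  show "- x \<in> range of_int" if "x \<in> range of_int" for x :: complex
  proof -
    from that obtain i where "x = of_int i" by blast
    then show ?thesis by (intro range_eqI[of _ _ "- i"]) simp
  qed
  show "x + y \<in> range of_int" "x * y \<in> range of_int"
    if "x \<in> range of_int" "y \<in> range of_int" for x y :: complex
  proof -
    from that obtain i j where "x = of_int i" "y = of_int j" by blast
    then show "x + y \<in> range of_int" "x * y \<in> range of_int"
      by (intro range_eqI[of _ _ "i + j"] range_eqI[of _ _ "i * j"]; simp)+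
  qed
qed

definition poly_over :: "complex set \<Rightarrow> complex poly \<Rightarrow> bool" where
  "poly_over S P \<longleftrightarrow> (\<forall>i. coeff P i \<in> S)"

context csubring
begin

lemma poly_over_const: "x \<in> S \<Longrightarrow> poly_over S [:x:]"
  by (simp add: poly_over_def coeff_pCons zero_closed split: nat.split)

lemma poly_over_0: "poly_over S 0"
  by (simp add: poly_over_def zero_closed)

lemma poly_over_1: "poly_over S 1"
  using poly_over_const[OF one_closed] by (simp add: one_pCons)

lemma poly_over_X: "poly_over S [:0, 1:]"
  by (simp add: poly_over_def coeff_pCons zero_closed one_closed split: nat.split)

lemma poly_over_monom: "x \<in> S \<Longrightarrow> poly_over S (monom x n)"
  by (simp add: poly_over_def coeff_monom zero_closed)

lemma poly_over_add: "poly_over S P \<Longrightarrow> poly_over S Q \<Longrightarrow> poly_over S (P + Q)"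
  by (simp add: poly_over_def add_closed)

lemma poly_over_uminus: "poly_over S P \<Longrightarrow> poly_over S (- P)"
  by (simp add: poly_over_def uminus_closed)

lemma poly_over_diff: "poly_over S P \<Longrightarrow> poly_over S Q \<Longrightarrow> poly_over S (P - Q)"
  by (simp add: poly_over_def diff_closed)

lemma poly_over_smult: "x \<in> S \<Longrightarrow> poly_over S P \<Longrightarrow> poly_over S (smult x P)"
  by (simp add: poly_over_def mult_closed)

lemma poly_over_mult: "poly_over S P \<Longrightarrow> poly_over S Q \<Longrightarrow> poly_over S (P * Q)"
  unfolding poly_over_def coeff_mult by (auto intro!: sum_closed mult_closed)

lemma poly_over_power: "poly_over S P \<Longrightarrow> poly_over S (P ^ n)"
  by (induction n) (auto simp: poly_over_1 poly_over_mult)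

lemma coeff_closed: "poly_over S P \<Longrightarrow> coeff P i \<in> S"
  by (simp add: poly_over_def)

lemma pseudo_division_step:
  assumes G: "poly_over S G" and F: "poly_over S F" and deg: "degree G \<le> degree F"
  defines "T \<equiv> monom (lead_coeff F) (degree F - degree G)"
  shows "poly_over S T" "poly_over S (smult (lead_coeff G) F - T * G)"
    and "smult (lead_coeff G) F - T * G = 0 \<or> degree (smult (lead_coeff G) F - T * G) < degree F"
proof -
  show T: "poly_over S T"
    unfolding T_def using F by (simp add: poly_over_monom coeff_closed)
  then show "poly_over S (smult (lead_coeff G) F - T * G)"
    using F G by (intro poly_over_diff poly_over_mult poly_over_smult coeff_closed)
  have "degree T \<le> degree F - degree G"
    unfolding T_def by (rule degree_monom_le)
  then have "degree (T * G) \<le> degree F"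
    using deg degree_mult_le[of T G] by linarith
  then have "degree (smult (lead_coeff G) F - T * G) \<le> degree F"
    using degree_diff_le degree_smult_le by blast
  moreover have "coeff (smult (lead_coeff G) F - T * G) (degree F) = 0"
    unfolding T_def using deg by (simp add: coeff_monom_mult)
  ultimately show "smult (lead_coeff G) F - T * G = 0 \<or>
      degree (smult (lead_coeff G) F - T * G) < degree F"
    by (metis le_neq_implies_less leading_coeff_0_iff)
qed

lemma pseudo_division:
  assumes G: "poly_over S G" "G \<noteq> 0" and F: "poly_over S F"
  obtains K M R where "poly_over S M" "poly_over S R"
    "smult (lead_coeff G ^ K) F = M * G + R" "R = 0 \<or> degree R < degree G"
proof -
  have "\<exists>K M R. poly_over S M \<and> poly_over S R \<and>
          smult (lead_coeff G ^ K) F = M * G + R \<and> (R = 0 \<or> degree R < degree G)"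
    using F
  proof (induction "degree F" arbitrary: F rule: less_induct)
    case less
    show ?case
    proof (cases "F = 0 \<or> degree F < degree G")
      case True
      then show ?thesis
        using less.prems by (intro exI[of _ 0] exI[of _ 0] exI[of _ F]) (auto simp: poly_over_0)
    next
      case False
      define T where "T = monom (lead_coeff F) (degree F - degree G)"
      define F' where "F' = smult (lead_coeff G) F - T * G"
      have T: "poly_over S T" and F': "poly_over S F'" and "F' = 0 \<or> degree F' < degree F"
        using pseudo_division_step[OF G(1) less.prems] False unfolding T_def F'_def by auto
      then obtain K M R where KMR: "poly_over S M" "poly_over S R"
          "smult (lead_coeff G ^ K) F' = M * G + R" "R = 0 \<or> degree R < degree G"
      proof (elim disjE)
        assume "F' = 0"
        then show thesis using that[of 0 0 0] by (simp add: poly_over_0)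
      next
        assume "degree F' < degree F"
        then show thesis using less.hyps[OF _ F'] that by blast
      qed
      have "smult (lead_coeff G ^ Suc K) F = (M + smult (lead_coeff G ^ K) T) * G + R"
        using KMR(3) unfolding F'_def by (simp add: algebra_simps smult_diff_right)
      then show ?thesis
        using KMR G T
        by (intro exI[of _ "Suc K"] exI[of _ "M + smult (lead_coeff G ^ K) T"] exI[of _ R])
           (auto intro!: poly_over_add poly_over_smult power_closed coeff_closed)
    qed
  qed
  then show ?thesis using that by blast
qed

end

definition adjoin :: "complex set \<Rightarrow> complex \<Rightarrow> complex set" where
  "adjoin S b = {poly P b | P. poly_over S P}"

context csubring
begin

lemma adjoin_csubring: "csubring (adjoin S b)"
proof
  show "1 \<in> adjoin S b"
    unfolding adjoin_def using poly_over_1 by force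
  show "- x \<in> adjoin S b" if "x \<in> adjoin S b" for x
  proof -
    from that obtain P where "poly_over S P" "x = poly P b"
      unfolding adjoin_def by blast
    then show ?thesis
      unfolding adjoin_def by (auto intro!: exI[of _ "- P"] poly_over_uminus)
  qed
  show "x + y \<in> adjoin S b" "x * y \<in> adjoin S b" if "x \<in> adjoin S b" "y \<in> adjoin S b" for x y
  proof -
    from that obtain P R where "poly_over S P" "poly_over S R" "x = poly P b" "y = poly R b"
      unfolding adjoin_def by blast
    then have "x + y = poly (P + R) b" "x * y = poly (P * R) b"
      "poly_over S (P + R)" "poly_over S (P * R)"
      by (simp_all add: poly_over_add poly_over_mult)
    then show "x + y \<in> adjoin S b" "x * y \<in> adjoin S b"
      unfolding adjoin_def by blast+
  qed
qed

lemma subset_adjoin: "S \<subseteq> adjoin S b"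
proof
  fix x assume "x \<in> S"
  then show "x \<in> adjoin S b"
    unfolding adjoin_def by (auto intro!: exI[of _ "[:x:]"] poly_over_const)
qed

lemma generator_in_adjoin: "b \<in> adjoin S b"
  unfolding adjoin_def by (auto intro!: exI[of _ "[:0, 1:]"] poly_over_X)

end

fun ring_gen :: "complex list \<Rightarrow> complex set" where
  "ring_gen [] = range of_int"
| "ring_gen (b # bs) = adjoin (ring_gen bs) b"

lemma csubring_ring_gen: "csubring (ring_gen l)"
  by (induction l) (simp_all add: csubring_Ints csubring.adjoin_csubring)

lemma set_subset_ring_gen: "set l \<subseteq> ring_gen l"
proof (induction l)
  case (Cons b l)
  then show ?case
    using csubring.subset_adjoin[OF csubring_ring_gen[of l], of b]
      csubring.generator_in_adjoin[OF csubring_ring_gen[of l], of b] by auto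
qed simp

definition divisible_in :: "complex set \<Rightarrow> nat \<Rightarrow> complex \<Rightarrow> bool" where
  "divisible_in S p x \<longleftrightarrow> (\<exists>s\<in>S. x = of_nat p * s)"

definition nilpotent_mod :: "complex set \<Rightarrow> nat \<Rightarrow> complex \<Rightarrow> bool" where
  "nilpotent_mod S p d \<longleftrightarrow> (\<exists>k. divisible_in S p (d ^ k))"

definition residually_nonnilpotent :: "complex set \<Rightarrow> bool" where
  "residually_nonnilpotent S \<longleftrightarrow> (\<forall>d\<in>S. d \<noteq> 0 \<longrightarrow> (\<exists>p. prime p \<and> \<not> nilpotent_mod S p d))"

context csubring
begin

lemma divisible_in_zero: "divisible_in S p 0"
  unfolding divisible_in_def using zero_closed by force

lemma divisible_in_add: "divisible_in S p x \<Longrightarrow> divisible_in S p y \<Longrightarrow> divisible_in S p (x + y)"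
  unfolding divisible_in_def by (auto intro!: bexI[of _ "_ + _"] add_closed simp: distrib_left)

lemma divisible_in_uminus: "divisible_in S p x \<Longrightarrow> divisible_in S p (- x)"
  unfolding divisible_in_def by (auto intro!: bexI[of _ "- _"] uminus_closed)

lemma divisible_in_mult: "divisible_in S p x \<Longrightarrow> y \<in> S \<Longrightarrow> divisible_in S p (x * y)"
  unfolding divisible_in_def by (auto intro!: bexI[of _ "_ * y"] mult_closed)

lemma divisible_in_sum: "(\<And>i. i \<in> A \<Longrightarrow> divisible_in S p (f i)) \<Longrightarrow> divisible_in S p (sum f A)"
  by (induction A rule: infinite_finite_induct) (auto simp: divisible_in_zero divisible_in_add)

end

text \<open>Base case: for a nonzero integer z, any prime p exceeding the absolute value
  of z divides no power of z.\<close>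

lemma residually_nonnilpotent_Ints: "residually_nonnilpotent (range of_int)"
  unfolding residually_nonnilpotent_def
proof (intro ballI impI)
  fix d :: complex
  assume "d \<in> range of_int" "d \<noteq> 0"
  then obtain z where z: "d = of_int z" "z \<noteq> 0" by auto
  obtain p where p: "prime p" "nat \<bar>z\<bar> < p" using bigger_prime by blast
  have "\<not> int p dvd z ^ k" for k
  proof
    assume dvd: "int p dvd z ^ k"
    show False
    proof (cases "k = 0")
      case True
      with dvd p(1) show False by simp
    next
      case False
      with dvd p(1) have "int p dvd z" by (simp add: prime_dvd_power_iff)
      from dvd_imp_le_int[OF z(2) this] have "int p \<le> \<bar>z\<bar>" by simp
      with p(2) show False by linarith
    qed
  qed
  moreover have "int p dvd z ^ k" if "divisible_in (range of_int) p (d ^ k)" for k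
  proof -
    from that obtain w where "(of_int (z ^ k) :: complex) = of_int (int p * w)"
      unfolding divisible_in_def z by auto
    then show ?thesis by (metis dvd_triv_left of_int_eq_iff)
  qed
  ultimately show "\<exists>p. prime p \<and> \<not> nilpotent_mod (range of_int) p d"
    using p(1) unfolding nilpotent_mod_def by blast
qed

text \<open>Adjoining a transcendental element b: S[b] is a polynomial ring, so
  p dividing d^k = D(b)^k in S[b] would make p divide the k-th power of the leading
  coefficient of D in S.\<close>

lemma (in csubring) residually_nonnilpotent_adjoin_transcendental:
  assumes S: "residually_nonnilpotent S"
    and transcendental: "\<And>Z. poly_over S Z \<Longrightarrow> poly Z b = 0 \<Longrightarrow> Z = 0"
  shows "residually_nonnilpotent (adjoin S b)"
  unfolding residually_nonnilpotent_def
proof (intro ballI impI)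
  fix d assume "d \<in> adjoin S b" "d \<noteq> 0"
  then obtain D where D: "poly_over S D" "d = poly D b"
    unfolding adjoin_def by blast
  with \<open>d \<noteq> 0\<close> have "lead_coeff D \<in> S" "lead_coeff D \<noteq> 0"
    using coeff_closed by auto
  then obtain p where p: "prime p" "\<not> nilpotent_mod S p (lead_coeff D)"
    using S unfolding residually_nonnilpotent_def by blast
  have "\<not> nilpotent_mod (adjoin S b) p d"
  proof
    assume "nilpotent_mod (adjoin S b) p d"
    then obtain k Y where Y: "poly_over S Y" "d ^ k = of_nat p * poly Y b"
      unfolding nilpotent_mod_def divisible_in_def adjoin_def by blast
    text \<open>Since b satisfies no relation, the equation lifts to S[x].\<close>
    have "poly_over S (D ^ k - smult (of_nat p) Y)"
      using D Y by (intro poly_over_diff poly_over_power poly_over_smult of_nat_closed)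
    moreover have "poly (D ^ k - smult (of_nat p) Y) b = 0"
      using D Y by simp
    ultimately have "D ^ k = smult (of_nat p) Y"
      using transcendental by fastforce
    then have "lead_coeff D ^ k = of_nat p * coeff Y (degree (D ^ k))"
      by (metis coeff_smult lead_coeff_power)
    then have "nilpotent_mod S p (lead_coeff D)"
      using Y coeff_closed unfolding nilpotent_mod_def divisible_in_def by blast
    with p show False by blast
  qed
  with p show "\<exists>p. prime p \<and> \<not> nilpotent_mod (adjoin S b) p d" by blast
qed

definition minimal_relation :: "complex set \<Rightarrow> complex \<Rightarrow> complex poly \<Rightarrow> bool" where
  "minimal_relation S b Q \<longleftrightarrow> poly_over S Q \<and> Q \<noteq> 0 \<and> poly Q b = 0 \<and>
     (\<forall>Z. poly_over S Z \<and> poly Z b = 0 \<and> degree Z < degree Q \<longrightarrow> Z = 0)"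

lemma minimal_relationD:
  assumes "minimal_relation S b Q"
  shows "poly_over S Q" "Q \<noteq> 0" "poly Q b = 0"
    and "poly_over S Z \<Longrightarrow> poly Z b = 0 \<Longrightarrow> degree Z < degree Q \<Longrightarrow> Z = 0"
  using assms unfolding minimal_relation_def by blast+

lemma minimal_relation_exists:
  assumes "poly_over S Q" "Q \<noteq> 0" "poly Q b = 0"
  obtains Q' where "minimal_relation S b Q'"
proof -
  obtain Q' where Q': "poly_over S Q' \<and> Q' \<noteq> 0 \<and> poly Q' b = 0"
    and least: "\<And>Z. poly_over S Z \<and> Z \<noteq> 0 \<and> poly Z b = 0 \<Longrightarrow> degree Q' \<le> degree Z"
    using ex_has_least_nat[of "\<lambda>Z. poly_over S Z \<and> Z \<noteq> 0 \<and> poly Z b = 0" Q degree] assms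
    by blast
  have "Z = 0" if "poly_over S Z" "poly Z b = 0" "degree Z < degree Q'" for Z
    using least[of Z] that by fastforce
  with Q' have "minimal_relation S b Q'"
    unfolding minimal_relation_def by blast
  then show ?thesis using that by blast
qed

text \<open>Nonzero constants do not vanish, so a minimal relation is nonconstant.\<close>

lemma minimal_relation_degree_pos:
  assumes "minimal_relation S b Q"
  shows "0 < degree Q"
proof (rule ccontr)
  assume "\<not> 0 < degree Q"
  then have "degree Q = 0" by simp
  then have Q_const: "Q = [:coeff Q 0:]"
    by (simp add: degree_0_id)
  have "poly Q b = coeff Q 0"
    by (subst Q_const) simp
  moreover note minimal_relationD(2,3)[OF assms]
  ultimately show False
    using \<open>degree Q = 0\<close> leading_coeff_0_iff by fastforce
qed

context csubring
begin

lemma reduce_by_minimal_relation: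
  assumes Q: "minimal_relation S b Q" and x: "x \<in> adjoin S b"
  obtains K R where "poly_over S R" "degree R < degree Q" "lead_coeff Q ^ K * x = poly R b"
proof -
  obtain Y where Y: "poly_over S Y" "x = poly Y b"
    using x unfolding adjoin_def by blast
  obtain K M R where KMR: "poly_over S M" "poly_over S R"
      "smult (lead_coeff Q ^ K) Y = M * Q + R" "R = 0 \<or> degree R < degree Q"
    using pseudo_division[OF minimal_relationD(1,2)[OF Q] Y(1)] .
  have "lead_coeff Q ^ K * x = poly R b"
    using arg_cong[OF KMR(3), of "\<lambda>P. poly P b"] minimal_relationD(3)[OF Q] Y(2) by simp
  moreover have "degree R < degree Q"
    using KMR(4) minimal_relation_degree_pos[OF Q] by auto
  ultimately show ?thesis using that KMR(2) by blast
qed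

text \<open>The relation p R(b) = q^K g has degree below Q, hence holds coefficientwise.\<close>

lemma divisible_in_adjoin_base:
  assumes Q: "minimal_relation S b Q" and g: "g \<in> S"
    and div: "divisible_in (adjoin S b) p g"
  obtains K where "divisible_in S p (lead_coeff Q ^ K * g)"
proof -
  obtain x where x: "x \<in> adjoin S b" "g = of_nat p * x"
    using div unfolding divisible_in_def by blast
  obtain K R where R: "poly_over S R" "degree R < degree Q" "lead_coeff Q ^ K * x = poly R b"
    using reduce_by_minimal_relation[OF Q x(1)] by blast
  define c where "c = lead_coeff Q ^ K * g"
  have c: "c \<in> S"
    unfolding c_def using minimal_relationD(1)[OF Q] g by (intro mult_closed power_closed coeff_closed)
  define Z where "Z = smult (of_nat p) R - [:c:]"
  have "poly_over S Z"
    unfolding Z_def using R c by (intro poly_over_diff poly_over_smult poly_over_const of_nat_closed)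
  moreover have "poly Z b = 0"
    unfolding Z_def c_def using R(3) x(2) by (simp add: algebra_simps)
  moreover have "degree Z < degree Q"
  proof -
    have "degree (smult (of_nat p) R) \<le> degree Q - 1"
      using R(2) degree_smult_le[of "of_nat p" R] by linarith
    then have "degree Z \<le> degree Q - 1"
      unfolding Z_def by (intro degree_diff_le) simp_all
    then show ?thesis
      using minimal_relation_degree_pos[OF Q] by linarith
  qed
  ultimately have "Z = 0"
    by (rule minimal_relationD(4)[OF Q])
  then have "coeff Z 0 = 0" by simp
  then have "c = of_nat p * coeff R 0"
    unfolding Z_def by simp
  then show ?thesis
    using that R(1) coeff_closed unfolding c_def divisible_in_def by blast
qed

context
  fixes b Q J G
  assumes Q: "minimal_relation S b Q"
    and J_over: "\<And>H. H \<in> J \<Longrightarrow> poly_over S H"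
    and J_comb: "\<And>H M N. H \<in> J \<Longrightarrow> poly_over S M \<Longrightarrow> poly_over S N \<Longrightarrow> M * H + N * Q \<in> J"
    and G: "G \<in> J" "poly G b \<noteq> 0"
    and least: "\<And>H. H \<in> J \<Longrightarrow> poly H b \<noteq> 0 \<Longrightarrow> degree G \<le> degree H"
begin

text \<open>The pseudo-remainder of G modulo Q lies in J and does not vanish at b,
  so G has smaller degree than Q.\<close>

lemma least_nonvanishing_degree_less: "degree G < degree Q"
proof -
  note Q_over = minimal_relationD(1)[OF Q] and Q_nz = minimal_relationD(2)[OF Q]
  obtain K M R where KMR: "poly_over S M" "poly_over S R"
      "smult (lead_coeff Q ^ K) G = M * Q + R" "R = 0 \<or> degree R < degree Q"
    using pseudo_division[OF Q_over Q_nz J_over[OF G(1)]] .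
  have "R = [:lead_coeff Q ^ K:] * G + (- M) * Q"
    using KMR(3) by (simp add: algebra_simps)
  then have "R \<in> J"
    using G KMR(1) Q_over by (metis J_comb poly_over_const poly_over_uminus power_closed coeff_closed)
  moreover have "poly R b \<noteq> 0"
    using arg_cong[OF KMR(3), of "\<lambda>P. poly P b"] minimal_relationD(3)[OF Q] Q_nz G(2) by auto
  ultimately show ?thesis
    using least[of R] KMR(4) by fastforce
qed

text \<open>The pseudo-remainder of Q modulo G lies in J and has degree below G, so it vanishes
  at b; then so does the quotient M, whose degree is below that of Q unless G is constant.\<close>

lemma least_nonvanishing_constant: "degree G = 0"
proof (rule ccontr)
  assume "degree G \<noteq> 0"
  have G_over: "poly_over S G" and G_nz: "G \<noteq> 0"
    using G J_over by auto
  obtain K M R where KMR: "poly_over S M" "poly_over S R"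
      "smult (lead_coeff G ^ K) Q = M * G + R" "R = 0 \<or> degree R < degree G"
    using pseudo_division[OF G_over G_nz minimal_relationD(1)[OF Q]] .
  have "R = (- M) * G + [:lead_coeff G ^ K:] * Q"
    using KMR(3) by (simp add: algebra_simps)
  then have "R \<in> J"
    using G KMR(1) G_over by (metis J_comb poly_over_const poly_over_uminus power_closed coeff_closed)
  then have "poly R b = 0"
    using least[of R] KMR(4) by fastforce
  then have "poly M b = 0"
    using arg_cong[OF KMR(3), of "\<lambda>P. poly P b"] minimal_relationD(3)[OF Q] G(2) by simp
  have "M \<noteq> 0"
  proof
    assume "M = 0"
    then have "smult (lead_coeff G ^ K) Q = R" using KMR(3) by simp
    moreover have "degree (smult (lead_coeff G ^ K) Q) = degree Q"
      using G_nz by simp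
    ultimately show False
      using KMR(4) least_nonvanishing_degree_less minimal_relationD(2)[OF Q] G_nz by auto
  qed
  have "degree M + degree G = degree (smult (lead_coeff G ^ K) Q - R)"
    using KMR(3) degree_mult_eq[OF \<open>M \<noteq> 0\<close> G_nz] by (simp add: algebra_simps)
  also have "\<dots> \<le> degree Q"
    using KMR(4) least_nonvanishing_degree_less by (intro degree_diff_le) auto
  finally have "M = 0"
    using minimal_relationD(4)[OF Q KMR(1) \<open>poly M b = 0\<close>] \<open>degree G \<noteq> 0\<close> by simp
  with \<open>M \<noteq> 0\<close> show False ..
qed

end

text \<open>Applied to J = D S[x] + Q S[x] where d = D(b), the previous lemma shows that
  every nonzero d in S[b] divides some nonzero element g of S within S[b].\<close>

lemma nonzero_divides_base_element:
  assumes Q: "minimal_relation S b Q" and d: "d \<in> adjoin S b" "d \<noteq> 0"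
  obtains g e where "g \<in> S" "g \<noteq> 0" "e \<in> adjoin S b" "g = e * d"
proof -
  obtain D where D: "poly_over S D" "d = poly D b"
    using d(1) unfolding adjoin_def by blast
  note Q_over = minimal_relationD(1)[OF Q]
  define J where "J = {A * D + B * Q | A B. poly_over S A \<and> poly_over S B}"
  have J_over: "poly_over S H" if "H \<in> J" for H
    using that D(1) Q_over unfolding J_def by (auto intro!: poly_over_add poly_over_mult)
  have J_comb: "M * H + N * Q \<in> J" if "H \<in> J" "poly_over S M" "poly_over S N" for H M N
  proof -
    from that(1) obtain A B where AB: "poly_over S A" "poly_over S B" "H = A * D + B * Q"
      unfolding J_def by blast
    then have "M * H + N * Q = (M * A) * D + (M * B + N) * Q"
      by (simp add: algebra_simps)
    then show ?thesis
      unfolding J_def using AB that(2,3) by (blast intro: poly_over_mult poly_over_add)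
  qed
  have "D \<in> J"
    unfolding J_def using poly_over_1 poly_over_0 by force
  then obtain G where G: "G \<in> J" "poly G b \<noteq> 0"
      and least: "\<And>H. H \<in> J \<Longrightarrow> poly H b \<noteq> 0 \<Longrightarrow> degree G \<le> degree H"
    using ex_has_least_nat[of "\<lambda>H. H \<in> J \<and> poly H b \<noteq> 0" D degree] D(2) d(2) by blast
  have "degree G = 0"
    using least_nonvanishing_constant[OF Q J_over J_comb G least] by blast
  then have G_const: "G = [:coeff G 0:]"
    by (simp add: degree_0_id)
  from G(1) obtain A B where AB: "poly_over S A" "G = A * D + B * Q"
    unfolding J_def by blast
  have G_value: "poly G b = coeff G 0"
    by (subst G_const) simp
  have "coeff G 0 = poly A b * d"
    using G_value AB(2) D(2) minimal_relationD(3)[OF Q] by simp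
  moreover have "coeff G 0 \<in> S" "coeff G 0 \<noteq> 0"
    using J_over[OF G(1)] coeff_closed G_value G(2) by auto
  moreover have "poly A b \<in> adjoin S b"
    using AB(1) unfolding adjoin_def by blast
  ultimately show ?thesis using that by blast
qed

text \<open>Adjoining an algebraic element b: write g = e d with g in S nonzero and pick
  p for which q g is not nilpotent modulo pS. If p divided d^k in S[b], it would divide
  g^k in S[b], hence q^K g^k in S, hence a power of q g.\<close>

lemma residually_nonnilpotent_adjoin_algebraic:
  assumes S: "residually_nonnilpotent S" and Q: "minimal_relation S b Q"
  shows "residually_nonnilpotent (adjoin S b)"
  unfolding residually_nonnilpotent_def
proof (intro ballI impI)
  fix d assume "d \<in> adjoin S b" "d \<noteq> 0"
  then obtain g e where g: "g \<in> S" "g \<noteq> 0" "e \<in> adjoin S b" "g = e * d"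
    using nonzero_divides_base_element[OF Q] by blast
  define q where "q = lead_coeff Q"
  have "q \<in> S" "q \<noteq> 0"
    unfolding q_def using minimal_relationD(1,2)[OF Q] coeff_closed by auto
  with g have "q * g \<in> S" "q * g \<noteq> 0"
    by (auto intro: mult_closed)
  then obtain p where p: "prime p" "\<not> nilpotent_mod S p (q * g)"
    using S unfolding residually_nonnilpotent_def by blast
  have "\<not> nilpotent_mod (adjoin S b) p d"
  proof
    assume "nilpotent_mod (adjoin S b) p d"
    then obtain k where "divisible_in (adjoin S b) p (d ^ k)"
      unfolding nilpotent_mod_def by blast
    then have "divisible_in (adjoin S b) p (d ^ k * e ^ k)"
      using csubring.divisible_in_mult[OF adjoin_csubring]
        csubring.power_closed[OF adjoin_csubring] g(3) by blast
    then have "divisible_in (adjoin S b) p (g ^ k)"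
      using g(4) by (simp add: power_mult_distrib mult.commute)
    then obtain K where "divisible_in S p (q ^ K * g ^ k)"
      using divisible_in_adjoin_base[OF Q power_closed[OF g(1)]] unfolding q_def by blast
    then have "divisible_in S p (q ^ K * g ^ k * (q ^ k * g ^ K))"
      using divisible_in_mult \<open>q \<in> S\<close> g(1) by (blast intro: mult_closed power_closed)
    then have "divisible_in S p ((q * g) ^ (K + k))"
      by (simp add: power_add power_mult_distrib algebra_simps)
    with p(2) show False
      unfolding nilpotent_mod_def by blast
  qed
  with p(1) show "\<exists>p. prime p \<and> \<not> nilpotent_mod (adjoin S b) p d" by blast
qed

lemma residually_nonnilpotent_adjoin:
  assumes "residually_nonnilpotent S"
  shows "residually_nonnilpotent (adjoin S b)"
proof (cases "\<exists>Q. poly_over S Q \<and> Q \<noteq> 0 \<and> poly Q b = 0")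
  case True
  then obtain Q where "minimal_relation S b Q"
    using minimal_relation_exists by blast
  with assms show ?thesis
    by (rule residually_nonnilpotent_adjoin_algebraic)
next
  case False
  with assms show ?thesis
    by (intro residually_nonnilpotent_adjoin_transcendental) auto
qed

end

lemma residually_nonnilpotent_ring_gen: "residually_nonnilpotent (ring_gen l)"
  by (induction l)
    (simp_all add: residually_nonnilpotent_Ints csubring.residually_nonnilpotent_adjoin[OF csubring_ring_gen])

definition monomial_weight :: "(nat \<Rightarrow>\<^sub>0 nat) \<Rightarrow> complex" where
  "monomial_weight \<alpha> = (\<Prod>i \<in> Poly_Mapping.keys \<alpha>. fact (Poly_Mapping.lookup \<alpha> i))"

lemma Lfun_superset:
  assumes "finite A" "Poly_Mapping.keys X \<subseteq> A"
  shows "Lfun X = (\<Sum>\<alpha>\<in>A. Poly_Mapping.lookup X \<alpha> * monomial_weight \<alpha>)"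
  unfolding Lfun_def monomial_weight_def using assms
  by (intro sum.mono_neutral_left) (auto simp: in_keys_iff)

lemma Lfun_add: "Lfun (X + Y) = Lfun X + Lfun Y"
proof -
  let ?A = "Poly_Mapping.keys X \<union> Poly_Mapping.keys Y"
  have "finite ?A" "Poly_Mapping.keys (X + Y) \<subseteq> ?A"
    by (auto simp: keys_add)
  then show ?thesis
    by (simp add: Lfun_superset[of ?A] lookup_add distrib_right sum.distrib)
qed

lemma Lfun_zero: "Lfun 0 = 0"
  by (simp add: Lfun_def)

lemma Lfun_sum: "Lfun (sum F A) = (\<Sum>i\<in>A. Lfun (F i))"
  by (induction A rule: infinite_finite_induct) (auto simp: Lfun_zero Lfun_add)

lemma Lfun_of_nat_mult: "Lfun (of_nat n * X) = of_nat n * Lfun X"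
  by (induction n) (auto simp: Lfun_zero Lfun_add distrib_right)

lemma Lfun_single: "Lfun (Poly_Mapping.single \<alpha> a) = a * monomial_weight \<alpha>"
  unfolding Lfun_def monomial_weight_def by auto

lemma sum_singles_superset:
  assumes "finite A" "Poly_Mapping.keys X \<subseteq> A"
  shows "(\<Sum>\<alpha>\<in>A. Poly_Mapping.single \<alpha> (Poly_Mapping.lookup X \<alpha>)) = X"
proof (rule poly_mapping_eqI)
  fix \<beta>
  show "Poly_Mapping.lookup (\<Sum>\<alpha>\<in>A. Poly_Mapping.single \<alpha> (Poly_Mapping.lookup X \<alpha>)) \<beta> =
      Poly_Mapping.lookup X \<beta>"
    using assms by (auto simp: lookup_sum lookup_single when_def in_keys_iff)
qed

lemma single_power:
  "Poly_Mapping.single \<alpha> a ^ n = Poly_Mapping.single (\<Sum>i<n. \<alpha>) (a ^ n)"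
  by (induction n) (simp_all add: mult_single add.commute)

lemma lookup_sum_copies:
  fixes \<alpha> :: "nat \<Rightarrow>\<^sub>0 nat"
  shows "Poly_Mapping.lookup (\<Sum>i<n. \<alpha>) j = n * Poly_Mapping.lookup \<alpha> j"
  unfolding lookup_sum by simp

lemma keys_sum_copies:
  fixes \<alpha> :: "nat \<Rightarrow>\<^sub>0 nat" and n :: nat
  assumes "n \<noteq> 0"
  shows "Poly_Mapping.keys (\<Sum>i<n. \<alpha>) = Poly_Mapping.keys \<alpha>"
  using assms unfolding set_eq_iff in_keys_iff lookup_sum_copies by simp

lemma Lfun_single_power:
  "Lfun (Poly_Mapping.single \<alpha> a ^ n) =
     a ^ n * (\<Prod>i \<in> Poly_Mapping.keys \<alpha>. fact (n * Poly_Mapping.lookup \<alpha> i))"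
proof (cases "n = 0")
  case False
  then show ?thesis
    unfolding single_power Lfun_single monomial_weight_def lookup_sum_copies keys_sum_copies[OF False] by simp
qed (use Lfun_single[of 0 1] in \<open>simp add: monomial_weight_def\<close>)

definition coeffs_in :: "complex set \<Rightarrow> cpoly \<Rightarrow> bool" where
  "coeffs_in S X \<longleftrightarrow> (\<forall>\<alpha>. Poly_Mapping.lookup X \<alpha> \<in> S)"

lemma coeffs_in_ring_gen:
  obtains l where "coeffs_in (ring_gen l) f"
proof -
  obtain l where l: "set l = Poly_Mapping.lookup f ` Poly_Mapping.keys f"
    using finite_list[of "Poly_Mapping.lookup f ` Poly_Mapping.keys f"] by auto
  have "Poly_Mapping.lookup f \<alpha> \<in> ring_gen l" for \<alpha>
  proof (cases "\<alpha> \<in> Poly_Mapping.keys f")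
    case True
    then show ?thesis
      using l set_subset_ring_gen[of l] by blast
  next
    case False
    then show ?thesis
      using csubring.zero_closed[OF csubring_ring_gen] by (simp add: in_keys_iff)
  qed
  then show ?thesis
    using that unfolding coeffs_in_def by blast
qed

context csubring
begin

lemma coeffs_in_single: "a \<in> S \<Longrightarrow> coeffs_in S (Poly_Mapping.single \<alpha> a)"
  unfolding coeffs_in_def by (auto simp: lookup_single when_def zero_closed)

lemma coeffs_in_sum: "(\<And>i. i \<in> A \<Longrightarrow> coeffs_in S (F i)) \<Longrightarrow> coeffs_in S (sum F A)"
  unfolding coeffs_in_def by (auto simp: lookup_sum intro!: sum_closed)

lemma coeffs_in_mult:
  assumes X: "coeffs_in S X" and Y: "coeffs_in S Y"
  shows "coeffs_in S (X * Y)"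
proof -
  let ?sX = "\<lambda>\<alpha>. Poly_Mapping.single \<alpha> (Poly_Mapping.lookup X \<alpha>)"
    and ?sY = "\<lambda>\<beta>. Poly_Mapping.single \<beta> (Poly_Mapping.lookup Y \<beta>)"
  have "X * Y = (\<Sum>\<alpha>\<in>Poly_Mapping.keys X. ?sX \<alpha>) * (\<Sum>\<beta>\<in>Poly_Mapping.keys Y. ?sY \<beta>)"
    by (simp add: sum_singles_superset)
  also have "\<dots> = (\<Sum>\<alpha>\<in>Poly_Mapping.keys X. \<Sum>\<beta>\<in>Poly_Mapping.keys Y.
      Poly_Mapping.single (\<alpha> + \<beta>) (Poly_Mapping.lookup X \<alpha> * Poly_Mapping.lookup Y \<beta>))"
    by (simp add: sum_product mult_single)
  finally show ?thesis
    using X Y unfolding coeffs_in_def[of S X] coeffs_in_def[of S Y]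
    by (auto intro!: coeffs_in_sum coeffs_in_single mult_closed)
qed

lemma coeffs_in_power: "coeffs_in S X \<Longrightarrow> coeffs_in S (X ^ n)"
  using coeffs_in_single[OF one_closed, of 0]
  by (induction n) (auto simp: coeffs_in_mult)

lemma Lfun_closed: "coeffs_in S X \<Longrightarrow> Lfun X \<in> S"
  unfolding Lfun_def coeffs_in_def by (auto intro!: sum_closed mult_closed prod_closed fact_closed)

text \<open>Frobenius congruence for L: L((X + Y)^p) = L(X^p) + L(Y^p) modulo pS,
  since the mixed binomial terms carry a binomial coefficient divisible by p.\<close>

lemma Lfun_power_add_cong:
  assumes p: "prime p" and X: "coeffs_in S X" and Y: "coeffs_in S Y"
  shows "divisible_in S p (Lfun ((X + Y) ^ p) - Lfun (X ^ p) - Lfun (Y ^ p))"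
proof -
  define h where "h k = of_nat (p choose k) * X ^ k * Y ^ (p - k)" for k
  have p0: "p \<noteq> 0" using p by auto
  have "{..p} = insert p (insert 0 {1..<p})"
    by auto
  then have "Lfun ((X + Y) ^ p) = Lfun (h p) + Lfun (h 0) + (\<Sum>k\<in>{1..<p}. Lfun (h k))"
    unfolding binomial_ring[of X Y p] h_def[symmetric] Lfun_sum using p0 by (simp add: add.assoc)
  moreover have "Lfun (h p) = Lfun (X ^ p)" "Lfun (h 0) = Lfun (Y ^ p)"
    unfolding h_def by simp_all
  moreover have "divisible_in S p (Lfun (h k))" if k: "k \<in> {1..<p}" for k
  proof -
    obtain N where N: "p choose k = p * N"
      using dvd_choose_prime[of k p] k p by auto
    have "Lfun (h k) = of_nat p * (of_nat N * Lfun (X ^ k * Y ^ (p - k)))"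
      unfolding h_def by (simp add: N mult.assoc Lfun_of_nat_mult)
    then show ?thesis
      unfolding divisible_in_def using X Y
      by (blast intro: mult_closed of_nat_closed Lfun_closed coeffs_in_mult coeffs_in_power)
  qed
  then have "divisible_in S p (\<Sum>k\<in>{1..<p}. Lfun (h k))"
    by (rule divisible_in_sum)
  ultimately show ?thesis
    by simp
qed

lemma Lfun_power_sum_cong:
  assumes p: "prime p" and F: "\<And>\<alpha>. \<alpha> \<in> A \<Longrightarrow> coeffs_in S (F \<alpha>)"
  shows "divisible_in S p (Lfun ((\<Sum>\<alpha>\<in>A. F \<alpha>) ^ p) - (\<Sum>\<alpha>\<in>A. Lfun (F \<alpha> ^ p)))"
  using F
proof (induction A rule: infinite_finite_induct)
  case (insert \<beta> A)
  let ?s = "\<Sum>\<alpha>\<in>A. F \<alpha>"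
  have "divisible_in S p (Lfun ((F \<beta> + ?s) ^ p) - Lfun (F \<beta> ^ p) - Lfun (?s ^ p))"
    using insert.prems by (intro Lfun_power_add_cong p coeffs_in_sum) auto
  moreover have "divisible_in S p (Lfun (?s ^ p) - (\<Sum>\<alpha>\<in>A. Lfun (F \<alpha> ^ p)))"
    using insert.IH insert.prems by simp
  ultimately have "divisible_in S p
      ((Lfun ((F \<beta> + ?s) ^ p) - Lfun (F \<beta> ^ p) - Lfun (?s ^ p)) +
       (Lfun (?s ^ p) - (\<Sum>\<alpha>\<in>A. Lfun (F \<alpha> ^ p))))"
    by (rule divisible_in_add)
  then show ?case
    using insert.hyps by (simp add: algebra_simps)
qed (use p prime_gt_0_nat in \<open>simp_all add: Lfun_zero zero_power divisible_in_zero\<close>)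

text \<open>For a nonconstant term, L of its p-th power contains the factor (p l)! for
  some positive exponent l, hence is divisible by p.\<close>

lemma divisible_Lfun_monomial_prime_power:
  assumes p: "prime p" and a: "a \<in> S" and \<alpha>: "\<alpha> \<noteq> 0"
  shows "divisible_in S p (Lfun (Poly_Mapping.single \<alpha> a ^ p))"
proof -
  define N :: nat where "N = (\<Prod>i \<in> Poly_Mapping.keys \<alpha>. fact (p * Poly_Mapping.lookup \<alpha> i))"
  obtain i where i: "i \<in> Poly_Mapping.keys \<alpha>"
    using \<alpha> by (metis all_not_in_conv keys_eq_empty)
  then have "p dvd fact (p * Poly_Mapping.lookup \<alpha> i)"
    using prime_ge_1_nat[OF p] by (intro dvd_fact) (auto simp: in_keys_iff)
  also have "\<dots> dvd N"
    unfolding N_def using i by (intro dvd_prodI) auto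
  finally obtain M where M: "N = p * M" ..
  have "Lfun (Poly_Mapping.single \<alpha> a ^ p) = a ^ p * of_nat N"
    unfolding Lfun_single_power N_def by (simp add: of_nat_prod)
  also have "\<dots> = of_nat p * (a ^ p * of_nat M)"
    unfolding M by simp
  finally show ?thesis
    unfolding divisible_in_def using a by (blast intro: mult_closed power_closed of_nat_closed)
qed

lemma Lfun_prime_power_cong:
  assumes p: "prime p" and f: "coeffs_in S f"
  shows "divisible_in S p (Lfun (f ^ p) - Poly_Mapping.lookup f 0 ^ p)"
proof -
  let ?A = "insert 0 (Poly_Mapping.keys f)"
    and ?t = "\<lambda>\<alpha>. Poly_Mapping.single \<alpha> (Poly_Mapping.lookup f \<alpha>)"
  let ?rest = "\<Sum>\<alpha>\<in>?A - {0}. Lfun (?t \<alpha> ^ p)"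
  have "(\<Sum>\<alpha>\<in>?A. ?t \<alpha>) = f"
    by (intro sum_singles_superset) auto
  moreover have "divisible_in S p (Lfun ((\<Sum>\<alpha>\<in>?A. ?t \<alpha>) ^ p) - (\<Sum>\<alpha>\<in>?A. Lfun (?t \<alpha> ^ p)))"
    using f unfolding coeffs_in_def by (intro Lfun_power_sum_cong p coeffs_in_single) auto
  ultimately have main: "divisible_in S p (Lfun (f ^ p) - (\<Sum>\<alpha>\<in>?A. Lfun (?t \<alpha> ^ p)))"
    by simp
  have "(\<Sum>\<alpha>\<in>?A. Lfun (?t \<alpha> ^ p)) = Lfun (?t 0 ^ p) + ?rest"
    by (rule sum.remove) auto
  also have "Lfun (?t 0 ^ p) = Poly_Mapping.lookup f 0 ^ p"
    by (simp add: Lfun_single_power)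
  finally have split: "(\<Sum>\<alpha>\<in>?A. Lfun (?t \<alpha> ^ p)) = Poly_Mapping.lookup f 0 ^ p + ?rest" .
  have "divisible_in S p ?rest"
    using f unfolding coeffs_in_def
    by (intro divisible_in_sum divisible_Lfun_monomial_prime_power p) auto
  from divisible_in_add[OF main this] show ?thesis
    unfolding split by (simp add: algebra_simps)
qed

end

text \<open>Let c be the nonzero constant term of f and S the ring generated by the coefficients
  of f; choose p with c not nilpotent modulo pS. If L(f^p) vanished, the main congruence would
  put c^p into pS.\<close>

theorem proposition4p8:
  fixes n :: nat and f :: cpoly
  assumes "in_vars n f"
    and "const_term f \<noteq> 0"
  shows "\<exists>m::nat. m \<ge> 1 \<and> Lfun (f ^ m) \<noteq> 0"
proof (rule ccontr)
  assume contra: "\<not> ?thesis"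
  let ?c = "Poly_Mapping.lookup f 0"
  obtain l where "coeffs_in (ring_gen l) f"
    by (rule coeffs_in_ring_gen)
  define S where "S = ring_gen l"
  interpret csubring S
    unfolding S_def by (rule csubring_ring_gen)
  have f: "coeffs_in S f"
    unfolding S_def by fact
  have "?c \<in> S" "?c \<noteq> 0"
    using f assms(2) unfolding coeffs_in_def const_term_def by auto
  then obtain p where p: "prime p" "\<not> nilpotent_mod S p ?c"
    using residually_nonnilpotent_ring_gen[of l] unfolding S_def residually_nonnilpotent_def by blast
  have "divisible_in S p (Lfun (f ^ p) - ?c ^ p)"
    using p(1) f by (rule Lfun_prime_power_cong)
  moreover have "Lfun (f ^ p) = 0"
    using contra prime_ge_1_nat[OF p(1)] by auto
  ultimately have "divisible_in S p (- (?c ^ p))"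
    by simp
  from divisible_in_uminus[OF this] have "divisible_in S p (?c ^ p)"
    by simp
  with p(2) show False
    unfolding nilpotent_mod_def by blast
qed

end
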